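(* Let $I\subseteq[0,\infty)$ be an interval, let $f:I\to\mathbb{R}$ be twice differentiable on $I^\circ$, and let $a,b\in I^\circ$ with $a<b$ such that $f''\in L^1[a,b]$. Let $q>1$, $p=\frac{q}{q-1}$, assume $2q-p-1>0$, and assume $|f''|^q$ is quasi-convex on $[a,b]$. Let $d: a=x_0<x_1<\dots<x_n=b$ be a partition of $[a,b]$, let $T(f,d)=\sum_{i=0}^{n-1}\frac{f(x_i)+f(x_{i+1})}{2}(x_{i+1}-x_i)$ and $E(f,d)=\int_a^b f(x)\,dx-T(f,d)$. Then $$|E(f,d)|\le \frac12\left(\frac{q-1}{2q-p-1}\right)^{\frac{q-1}{q}}\bigl(\beta(p+1,q+1)\bigr)^{\frac1q}\sum_{i=0}^{n-1}(x_{i+1}-x_i)^3\left(\max\{|f''(x_i)|^q,|f''(x_{i+1})|^q\}\right)^{\frac1q}.$$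
   Context: A function $g:[a,b]\to\mathbb{R}$ is quasi-convex on $[a,b]$ if $g(\lambda x+(1-\lambda)y)\le\max\{g(x),g(y)\}$ for all $x,y\in[a,b]$ and $\lambda\in[0,1]$. $\beta(x,y)=\int_0^1 t^{x-1}(1-t)^{y-1}\,dt$ for $x,y>0$. *)

theory Defs
  imports "HOL-Analysis.Analysis"
begin

definition quasi_convex_on :: "real set \<Rightarrow> (real \<Rightarrow> real) \<Rightarrow> bool" where
  "quasi_convex_on S g \<longleftrightarrow>
     (\<forall>x\<in>S. \<forall>y\<in>S. \<forall>l::real. 0 \<le> l \<and> l \<le> 1 \<longrightarrow>
        g (l * x + (1 - l) * y) \<le> max (g x) (g y))"

definition beta_fun :: "real \<Rightarrow> real \<Rightarrow> real" where
  "beta_fun x y = integral {0..1} (\<lambda>t. t powr (x - 1) * (1 - t) powr (y - 1))"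

end

theory Submission
  imports Defs
begin

(* The proof compares the paper's constant with the classical one.
   (1) On each subinterval [x_i, x_(i+1)], quasi-convexity of |f''|^q gives
       |f''| <= K_i := max(|f''(x_i)|^q, |f''(x_(i+1))|^q)^(1/q).
   (2) The classical trapezoid estimate |error| <= K h^3/12 on an interval of
       length h, proved by comparing f minus its chord with the parabola
       K(t-u)(v-t)/2 via convexity, is summed over the partition.
   (3) Hoelder's inequality on [0,1] (obtained from Young's inequality) shows
       1/6 <= ((q-1)/(2q-p-1))^((q-1)/q) * beta(p+1,q+1)^(1/q), so
       K h^3/12 <= 1/2 * (that constant) * h^3 K. *)

lemma integral_young_bound:
  fixes g h :: "real \<Rightarrow> real" and S :: "real set"
  assumes pq: "p > 1" "q > 1" "1/p + 1/q = 1"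
    and nonneg: "\<And>t. t \<in> S \<Longrightarrow> g t \<ge> 0" "\<And>t. t \<in> S \<Longrightarrow> h t \<ge> 0"
    and prod: "((\<lambda>t. g t * h t) has_integral J) S"
    and gp: "((\<lambda>t. g t powr p) has_integral G) S"
    and hq: "((\<lambda>t. h t powr q) has_integral H) S"
    and scale: "\<alpha> > 0" "\<beta> > 0"
  shows "J \<le> \<alpha> * \<beta> * (G / (p * \<alpha> powr p) + H / (q * \<beta> powr q))"
proof -
  have pointwise: "g t * h t \<le> \<alpha> * \<beta> * (g t powr p / (p * \<alpha> powr p) + h t powr q / (q * \<beta> powr q))"
    if t: "t \<in> S" for t
  proof -
    have young: "(g t / \<alpha>) * (h t / \<beta>) \<le> (g t / \<alpha>) powr p / p + (h t / \<beta>) powr q / q"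
      by (rule Youngs_inequality) (use pq nonneg t scale in auto)
    have "g t * h t = \<alpha> * \<beta> * ((g t / \<alpha>) * (h t / \<beta>))" using scale by simp
    also have "\<dots> \<le> \<alpha> * \<beta> * ((g t / \<alpha>) powr p / p + (h t / \<beta>) powr q / q)"
      by (rule mult_left_mono[OF young]) (use scale in simp)
    also have "\<dots> = \<alpha> * \<beta> * (g t powr p / (p * \<alpha> powr p) + h t powr q / (q * \<beta> powr q))"
      using scale nonneg[OF t] by (simp add: powr_divide mult.commute)
    finally show ?thesis .
  qed
  have bound_integral: "((\<lambda>t. \<alpha> * \<beta> * (g t powr p / (p * \<alpha> powr p) + h t powr q / (q * \<beta> powr q)))
      has_integral \<alpha> * \<beta> * (G / (p * \<alpha> powr p) + H / (q * \<beta> powr q))) S"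
    by (intro has_integral_mult_right has_integral_add has_integral_divide gp hq)
  from prod bound_integral pointwise show ?thesis by (rule has_integral_le)
qed

(* Hoelder's inequality for nonnegative functions, derived from the scaled Young
   bound by optimising the scales (the degenerate case H = 0 by letting beta -> 0). *)
lemma integral_holder:
  fixes g h :: "real \<Rightarrow> real" and S :: "real set"
  assumes pq: "p > 1" "q > 1" "1/p + 1/q = 1"
    and nonneg: "\<And>t. t \<in> S \<Longrightarrow> g t \<ge> 0" "\<And>t. t \<in> S \<Longrightarrow> h t \<ge> 0"
    and prod: "((\<lambda>t. g t * h t) has_integral J) S"
    and gp: "((\<lambda>t. g t powr p) has_integral G) S"
    and hq: "((\<lambda>t. h t powr q) has_integral H) S"
    and G: "G > 0"
  shows "J \<le> G powr (1/p) * H powr (1/q)"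
proof -
  define \<alpha> where "\<alpha> = G powr (1/p)"
  have \<alpha>: "\<alpha> > 0" "\<alpha> powr p = G" using G pq by (auto simp: \<alpha>_def powr_powr)
  have young: "J \<le> \<alpha> * \<beta> * (1/p + H / (q * \<beta> powr q))" if "\<beta> > 0" for \<beta>
    using integral_young_bound[OF pq nonneg prod gp hq \<alpha>(1) that] \<alpha> G by simp
  have H: "H \<ge> 0" using hq by (rule has_integral_nonneg) (use nonneg in auto)
  show ?thesis
  proof (cases "H = 0")
    case True
    show ?thesis
    proof (rule ccontr)
      assume "\<not> ?thesis"
      then have J: "J > 0" using True pq by simp
      have "J \<le> \<alpha> * (p * J / (2 * \<alpha>)) * (1/p)"
        using young[of "p * J / (2 * \<alpha>)"] J \<alpha> pq True by simp
      then show False using J \<alpha> pq by simp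
    qed
  next
    case False
    then have "H > 0" using H by simp
    then show ?thesis
      using young[of "H powr (1/q)"] pq by (simp add: powr_powr \<alpha>_def)
  qed
qed

(* The constant of the theorem is at least 1/6: apply Hoelder to
   t(1-t) = t^((q-2)/(q-1)) * (t^(1/(q-1)) (1-t)) on [0,1], whose two factors
   have p-th resp. q-th power integrals A = (q-1)/(2q-p-1) and beta(p+1,q+1). *)
lemma paper_constant_ge:
  fixes p q :: real
  assumes q: "q > 1" and p: "p = q / (q - 1)" and pq: "2 * q - p - 1 > 0"
  shows "1/6 \<le> ((q - 1) / (2 * q - p - 1)) powr ((q - 1) / q) * (beta_fun (p + 1) (q + 1)) powr (1 / q)"
proof -
  define A where "A = (q - 1) / (2 * q - p - 1)"
  define B where "B = beta_fun (p + 1) (q + 1)"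
  define r where "r = (q - 2) / (q - 1)"
  define s where "s = 1 / (q - 1)"
  have p1: "p > 1" using q unfolding p by (simp add: less_divide_eq)
  have conj: "1/p + 1/q = 1" and expo: "(q - 1) / q = 1 / p"
    using q unfolding p by (simp_all add: field_simps)
  have A: "A > 0" and rpA: "r * p + 1 = 1 / A"
    using q pq unfolding A_def r_def p by (simp_all add: field_simps)
  have "r * p > -1" using A rpA by (smt (verit) divide_pos_pos)
  from has_integral_powr_from_0[OF this, of 1] rpA A
  have intG: "((\<lambda>t. (t powr r) powr p) has_integral A) {0..1}"
    by (simp add: powr_powr)
  have "s * q = p" using q unfolding s_def p by simp
  then have "((\<lambda>t. (t powr s * (1 - t)) powr q) has_integral B) {0..1}
      \<longleftrightarrow> ((\<lambda>t. t powr p * (1 - t) powr q) has_integral B) {0..1}"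
    by (intro has_integral_cong) (auto simp: powr_mult powr_powr)
  moreover have "continuous_on {0..1} (\<lambda>t::real. t powr p * (1 - t) powr q)"
    using p1 q by (intro continuous_intros continuous_on_powr') auto
  ultimately have intH: "((\<lambda>t. (t powr s * (1 - t)) powr q) has_integral B) {0..1}"
    unfolding B_def beta_fun_def by (simp add: integrable_integral integrable_continuous_interval)
  have "r + s = 1" using q by (simp add: r_def s_def field_simps)
  then have "((\<lambda>t. t powr r * (t powr s * (1 - t))) has_integral (1/6)) {0..1}
      \<longleftrightarrow> ((\<lambda>t::real. t * (1 - t)) has_integral (1/6)) {0..1}"
    by (intro has_integral_cong) (auto simp: powr_add[symmetric])
  moreover have "((\<lambda>t::real. t * (1 - t)) has_integral
      ((\<lambda>t. t^2/2 - t^3/3) 1 - (\<lambda>t. t^2/2 - t^3/3) 0)) {0..1}"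
    by (intro fundamental_theorem_of_calculus)
       (auto simp flip: has_real_derivative_iff_has_vector_derivative
             intro!: derivative_eq_intros simp: algebra_simps power2_eq_square)
  ultimately have intJ: "((\<lambda>t. t powr r * (t powr s * (1 - t))) has_integral (1/6)) {0..1}"
    by simp
  have "1/6 \<le> A powr (1/p) * B powr (1/q)"
    by (rule integral_holder[OF p1 q conj _ _ intJ intG intH A]) auto
  then show ?thesis by (simp add: A_def B_def expo)
qed

lemma convex_on_nonpos_between_zeros:
  fixes \<psi> :: "real \<Rightarrow> real"
  assumes "convex_on {u..v} \<psi>" "u < v" "\<psi> u = 0" "\<psi> v = 0" "t \<in> {u..v}"
  shows "\<psi> t \<le> 0"
proof -
  define s where "s = (t - u) / (v - u)"
  have s: "0 \<le> s" "s \<le> 1" using assms(2,5) by (auto simp: s_def field_simps)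
  have "s * (v - u) = t - u" using assms(2) by (simp add: s_def)
  then have t: "t = (1 - s) *\<^sub>R u + s *\<^sub>R v" by (simp add: algebra_simps)
  have "\<psi> ((1 - s) *\<^sub>R u + s *\<^sub>R v) \<le> (1 - s) * \<psi> u + s * \<psi> v"
    by (rule convex_onD[OF assms(1) s]) (use assms(2) in auto)
  then show ?thesis using t assms(3,4) by simp
qed

(* If g vanishes at u and v and g'' >= -K, then g lies below the parabola
   K(t-u)(v-t)/2, since the difference is convex and vanishes at the endpoints. *)
lemma vanishing_endpoints_upper_bound:
  fixes g g' g'' :: "real \<Rightarrow> real"
  assumes uv: "u < v"
    and d1: "\<And>t. t \<in> {u..v} \<Longrightarrow> (g has_real_derivative g' t) (at t)"
    and d2: "\<And>t. t \<in> {u..v} \<Longrightarrow> (g' has_real_derivative g'' t) (at t)"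
    and lower: "\<And>t. t \<in> {u..v} \<Longrightarrow> g'' t \<ge> - K"
    and ends: "g u = 0" "g v = 0"
    and t: "t \<in> {u..v}"
  shows "g t \<le> K * ((t - u) * (v - t)) / 2"
proof -
  define \<psi> where "\<psi> t = g t - K * ((t - u) * (v - t)) / 2" for t
  have "convex_on {u..v} \<psi>"
  proof (rule f''_ge0_imp_convex)
    show "(\<psi> has_real_derivative (g' t - K * ((v - t) - (t - u)) / 2)) (at t)"
      if "t \<in> {u..v}" for t
      unfolding \<psi>_def by (auto intro!: derivative_eq_intros d1[OF that] simp: field_simps)
    show "((\<lambda>t. g' t - K * ((v - t) - (t - u)) / 2) has_real_derivative (g'' t + K)) (at t)"
      if "t \<in> {u..v}" for t
      by (auto intro!: derivative_eq_intros d2[OF that] simp: field_simps)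
    show "0 \<le> g'' t + K" if "t \<in> {u..v}" for t using lower[OF that] by linarith
  qed simp
  moreover have "\<psi> u = 0" "\<psi> v = 0" using ends by (auto simp: \<psi>_def)
  ultimately have "\<psi> t \<le> 0" using convex_on_nonpos_between_zeros uv t by blast
  then show ?thesis by (simp add: \<psi>_def)
qed

lemma chord_has_integral:
  fixes u v A B :: real
  assumes uv: "u < v"
  shows "((\<lambda>t. A + (B - A) / (v - u) * (t - u)) has_integral ((A + B) / 2 * (v - u))) {u..v}"
proof -
  define c where "c = (B - A) / (v - u)"
  define P where "P t = A * t + c * (t - u)^2 / 2" for t
  have "((\<lambda>t. A + c * (t - u)) has_integral (P v - P u)) {u..v}"
    unfolding P_def using uv
    by (intro fundamental_theorem_of_calculus)
       (auto simp flip: has_real_derivative_iff_has_vector_derivative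
             intro!: derivative_eq_intros simp: field_simps power2_eq_square)
  moreover have "P v - P u = (A + B) / 2 * (v - u)"
    using uv by (simp add: P_def c_def power2_eq_square field_simps)
  ultimately show ?thesis by (simp add: c_def)
qed

lemma parabola_has_integral:
  fixes u v K :: real
  assumes "u \<le> v"
  shows "((\<lambda>t. K * ((t - u) * (v - t)) / 2) has_integral (K * (v - u) ^ 3 / 12)) {u..v}"
proof -
  define P where "P t = K / 2 * ((v - u) * (t - u)^2 / 2 - (t - u)^3 / 3)" for t
  have "((\<lambda>t. K * ((t - u) * (v - t)) / 2) has_integral (P v - P u)) {u..v}"
    unfolding P_def using assms
    by (intro fundamental_theorem_of_calculus)
       (auto simp flip: has_real_derivative_iff_has_vector_derivative
             intro!: derivative_eq_intros simp: field_simps power2_eq_square)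
  moreover have "P v - P u = K * (v - u) ^ 3 / 12"
    by (simp add: P_def power2_eq_square power3_eq_cube field_simps)
  ultimately show ?thesis by simp
qed

(* The classical error bound of the trapezoid rule on one interval:
   if |f''| <= K then |int_u^v f - (f u + f v)(v-u)/2| <= K (v-u)^3/12.
   The deviation of f from its chord is squeezed between +-K(t-u)(v-t)/2. *)
lemma trapezoid_error_interval:
  fixes f f' f'' :: "real \<Rightarrow> real"
  assumes uv: "u < v"
    and d1: "\<And>t. t \<in> {u..v} \<Longrightarrow> (f has_real_derivative f' t) (at t)"
    and d2: "\<And>t. t \<in> {u..v} \<Longrightarrow> (f' has_real_derivative f'' t) (at t)"
    and bound: "\<And>t. t \<in> {u..v} \<Longrightarrow> \<bar>f'' t\<bar> \<le> K"
  shows "\<bar>integral {u..v} f - (f u + f v) / 2 * (v - u)\<bar> \<le> K * (v - u) ^ 3 / 12"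
proof -
  define c where "c = (f v - f u) / (v - u)"
  define L where "L t = f u + c * (t - u)" for t
  define w where "w t = K * ((t - u) * (v - t)) / 2" for t
  have ends: "f u - L u = 0" "f v - L v = 0" using uv by (auto simp: L_def c_def)
  have dg: "((\<lambda>t. f t - L t) has_real_derivative f' t - c) (at t)" if "t \<in> {u..v}" for t
    unfolding L_def by (auto intro!: derivative_eq_intros d1[OF that])
  have dg': "((\<lambda>t. f' t - c) has_real_derivative f'' t) (at t)" if "t \<in> {u..v}" for t
    by (auto intro!: derivative_eq_intros d2[OF that])
  have upper: "f t - L t \<le> w t" if "t \<in> {u..v}" for t
    unfolding w_def
    by (rule vanishing_endpoints_upper_bound[OF uv dg dg' _ ends that])
       (use bound in \<open>force simp: abs_le_iff\<close>)+
  have lower: "- w t \<le> f t - L t" if "t \<in> {u..v}" for t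
  proof -
    have "-(f t - L t) \<le> w t"
      unfolding w_def
      by (rule vanishing_endpoints_upper_bound[OF uv dg[THEN DERIV_minus] dg'[THEN DERIV_minus] _ _ _ that])
         (use ends bound in \<open>force simp: abs_le_iff\<close>)+
    then show ?thesis by simp
  qed
  have "continuous_on {u..v} f"
    using d1 by (meson DERIV_continuous continuous_at_imp_continuous_on)
  then have int_f: "(f has_integral integral {u..v} f) {u..v}"
    by (simp add: integrable_integral integrable_continuous_interval)
  have int_L: "(L has_integral ((f u + f v) / 2 * (v - u))) {u..v}"
    using chord_has_integral[OF uv, of "f u" "f v"] unfolding L_def c_def .
  have int_w: "(w has_integral (K * (v - u) ^ 3 / 12)) {u..v}"
    using parabola_has_integral[of u v K] uv unfolding w_def by simp
  have int_err: "((\<lambda>t. f t - L t) has_integral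
      (integral {u..v} f - (f u + f v) / 2 * (v - u))) {u..v}"
    by (rule has_integral_diff[OF int_f int_L])
  have "integral {u..v} f - (f u + f v) / 2 * (v - u) \<le> K * (v - u) ^ 3 / 12"
    by (rule has_integral_le[OF int_err int_w upper])
  moreover have "- (K * (v - u) ^ 3 / 12) \<le> integral {u..v} f - (f u + f v) / 2 * (v - u)"
    by (rule has_integral_le[OF has_integral_neg[OF int_w] int_err lower])
  ultimately show ?thesis by linarith
qed

lemma partition_mono:
  fixes x :: "nat \<Rightarrow> real"
  assumes "\<And>i. i < n \<Longrightarrow> x i < x (Suc i)"
  shows "i \<le> j \<Longrightarrow> j \<le> n \<Longrightarrow> x i \<le> x j"
proof (induction j)
  case (Suc j)
  show ?case
  proof (cases "i = Suc j")
    case False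
    then have "x i \<le> x j" using Suc by simp
    also have "x j \<le> x (Suc j)" using assms[of j] Suc by simp
    finally show ?thesis .
  qed simp
qed simp

lemma integral_over_partition:
  fixes x :: "nat \<Rightarrow> real" and f :: "real \<Rightarrow> real"
  assumes "\<And>i. i < n \<Longrightarrow> x i < x (Suc i)" "continuous_on {x 0..x n} f"
  shows "integral {x 0..x n} f = (\<Sum>i<n. integral {x i..x (Suc i)} f)"
  using assms
proof (induction n)
  case (Suc n)
  have left: "x 0 \<le> x n" using partition_mono[of "Suc n" x 0 n] Suc.prems(1) by simp
  have right: "x n \<le> x (Suc n)" using Suc.prems(1)[of n] by simp
  have "continuous_on {x 0..x n} f"
    using Suc.prems(2) by (rule continuous_on_subset) (use right in auto)
  then have "integral {x 0..x n} f = (\<Sum>i<n. integral {x i..x (Suc i)} f)"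
    using Suc.IH Suc.prems(1) by simp
  moreover have "integral {x 0..x n} f + integral {x n..x (Suc n)} f = integral {x 0..x (Suc n)} f"
    by (rule Henstock_Kurzweil_Integration.integral_combine[OF left right integrable_continuous_interval[OF Suc.prems(2)]])
  ultimately show ?case by simp
qed simp

lemma composite_trapezoid_error:
  fixes f f' f'' :: "real \<Rightarrow> real" and x K :: "nat \<Rightarrow> real"
  assumes part: "\<And>i. i < n \<Longrightarrow> x i < x (Suc i)"
    and d1: "\<And>t. t \<in> {x 0..x n} \<Longrightarrow> (f has_real_derivative f' t) (at t)"
    and d2: "\<And>t. t \<in> {x 0..x n} \<Longrightarrow> (f' has_real_derivative f'' t) (at t)"
    and bound: "\<And>i t. i < n \<Longrightarrow> t \<in> {x i..x (Suc i)} \<Longrightarrow> \<bar>f'' t\<bar> \<le> K i"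
  shows "\<bar>integral {x 0..x n} f - (\<Sum>i<n. (f (x i) + f (x (Suc i))) / 2 * (x (Suc i) - x i))\<bar>
         \<le> (\<Sum>i<n. K i * (x (Suc i) - x i) ^ 3 / 12)"
proof -
  have sub: "{x i..x (Suc i)} \<subseteq> {x 0..x n}" if "i < n" for i
    using partition_mono[of n x 0 i, OF part] partition_mono[of n x "Suc i" n, OF part] that by auto
  have local: "\<bar>integral {x i..x (Suc i)} f - (f (x i) + f (x (Suc i))) / 2 * (x (Suc i) - x i)\<bar>
      \<le> K i * (x (Suc i) - x i) ^ 3 / 12" if i: "i < n" for i
  proof (rule trapezoid_error_interval)
    show "x i < x (Suc i)" using part[OF i] .
  qed (use sub[OF i] d1 d2 bound[OF i] in blast)+
  have "continuous_on {x 0..x n} f"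
    using d1 by (meson DERIV_continuous continuous_at_imp_continuous_on)
  then have "integral {x 0..x n} f - (\<Sum>i<n. (f (x i) + f (x (Suc i))) / 2 * (x (Suc i) - x i))
      = (\<Sum>i<n. integral {x i..x (Suc i)} f - (f (x i) + f (x (Suc i))) / 2 * (x (Suc i) - x i))"
    by (simp add: integral_over_partition[of n x, OF part] sum_subtractf)
  then have "\<bar>integral {x 0..x n} f - (\<Sum>i<n. (f (x i) + f (x (Suc i))) / 2 * (x (Suc i) - x i))\<bar>
      \<le> (\<Sum>i<n. \<bar>integral {x i..x (Suc i)} f - (f (x i) + f (x (Suc i))) / 2 * (x (Suc i) - x i)\<bar>)"
    by (simp only: sum_abs)
  also have "\<dots> \<le> (\<Sum>i<n. K i * (x (Suc i) - x i) ^ 3 / 12)"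
    by (rule sum_mono) (use local in simp)
  finally show ?thesis .
qed

lemma quasi_convex_on_interval_le_max:
  fixes g :: "real \<Rightarrow> real"
  assumes qc: "quasi_convex_on S g" and uv: "u \<in> S" "v \<in> S" "u \<le> v" and t: "t \<in> {u..v}"
  shows "g t \<le> max (g u) (g v)"
proof (cases "u = v")
  case False
  define l where "l = (v - t) / (v - u)"
  have l: "0 \<le> l" "l \<le> 1" using t uv False by (auto simp: l_def field_simps)
  have "l * (v - u) = v - t" using uv False by (simp add: l_def)
  then have "t = l * u + (1 - l) * v" by (simp add: algebra_simps)
  then show ?thesis using qc uv l unfolding quasi_convex_on_def by auto
qed (use t in auto)

lemma quasi_convex_powr_abs_bound:
  fixes g :: "real \<Rightarrow> real"
  assumes qc: "quasi_convex_on S (\<lambda>t. \<bar>g t\<bar> powr q)" and q: "q > 0"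
    and uv: "u \<in> S" "v \<in> S" "u \<le> v" and t: "t \<in> {u..v}"
  shows "\<bar>g t\<bar> \<le> (max (\<bar>g u\<bar> powr q) (\<bar>g v\<bar> powr q)) powr (1 / q)"
proof -
  have "\<bar>g t\<bar> powr q \<le> max (\<bar>g u\<bar> powr q) (\<bar>g v\<bar> powr q)"
    using quasi_convex_on_interval_le_max[OF qc uv t] by simp
  then have "(\<bar>g t\<bar> powr q) powr (1 / q) \<le> (max (\<bar>g u\<bar> powr q) (\<bar>g v\<bar> powr q)) powr (1 / q)"
    by (intro powr_mono2) (use q in auto)
  then show ?thesis using q by (simp add: powr_powr)
qed

theorem proposition1:
  fixes I :: "real set" and f f' f'' :: "real \<Rightarrow> real"
    and a b p q :: real and n :: nat and x :: "nat \<Rightarrow> real"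
  assumes I: "is_interval I" "I \<subseteq> {0..}"
    and f': "\<And>t. t \<in> interior I \<Longrightarrow> (f has_real_derivative f' t) (at t)"
    and f'': "\<And>t. t \<in> interior I \<Longrightarrow> (f' has_real_derivative f'' t) (at t)"
    and ab: "a \<in> interior I" "b \<in> interior I" "a < b"
    and L1: "f'' absolutely_integrable_on {a..b}"
    and q: "q > 1" and p: "p = q / (q - 1)" and pq: "2 * q - p - 1 > 0"
    and qc: "quasi_convex_on {a..b} (\<lambda>t. \<bar>f'' t\<bar> powr q)"
    and part: "x 0 = a" "x n = b" "\<And>i. i < n \<Longrightarrow> x i < x (Suc i)"
  shows "\<bar>integral {a..b} f
            - (\<Sum>i<n. (f (x i) + f (x (Suc i))) / 2 * (x (Suc i) - x i))\<bar>
         \<le> 1/2 * ((q - 1) / (2 * q - p - 1)) powr ((q - 1) / q)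
             * (beta_fun (p + 1) (q + 1)) powr (1 / q)
             * (\<Sum>i<n. (x (Suc i) - x i) ^ 3
                  * (max (\<bar>f'' (x i)\<bar> powr q) (\<bar>f'' (x (Suc i))\<bar> powr q)) powr (1 / q))"
proof -
  define C where "C = ((q - 1) / (2 * q - p - 1)) powr ((q - 1) / q) * (beta_fun (p + 1) (q + 1)) powr (1 / q)"
  define K where "K i = (max (\<bar>f'' (x i)\<bar> powr q) (\<bar>f'' (x (Suc i))\<bar> powr q)) powr (1 / q)" for i
  have "convex (interior I)" using I(1) by (simp add: is_interval_convex convex_interior)
  then have ab_inside: "{a..b} \<subseteq> interior I"
    using closed_segment_subset[OF ab(1,2)] ab(3) by (simp add: closed_segment_eq_real_ivl)
  have nodes: "x i \<in> {a..b}" if "i \<le> n" for i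
    using partition_mono[of n x 0 i, OF part(3)] partition_mono[of n x i n, OF part(3)] that part(1,2)
    by auto
  have bound: "\<bar>f'' t\<bar> \<le> K i" if "i < n" "t \<in> {x i..x (Suc i)}" for i t
    unfolding K_def
    by (rule quasi_convex_powr_abs_bound[OF qc _ nodes nodes]) (use q part(3) that in auto)
  have "\<bar>integral {a..b} f - (\<Sum>i<n. (f (x i) + f (x (Suc i))) / 2 * (x (Suc i) - x i))\<bar>
      \<le> (\<Sum>i<n. K i * (x (Suc i) - x i) ^ 3 / 12)"
    unfolding part(1,2)[symmetric]
    by (rule composite_trapezoid_error[of n x f f' f'', OF part(3)])
       (use ab_inside[unfolded part(1,2)[symmetric]] f' f'' bound in auto)
  also have "\<dots> \<le> (\<Sum>i<n. 1/2 * C * ((x (Suc i) - x i) ^ 3 * K i))"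
  proof (rule sum_mono)
    fix i assume "i \<in> {..<n}"
    then have "0 \<le> (x (Suc i) - x i) ^ 3 * K i" using part(3)[of i] by (simp add: K_def)
    from mult_right_mono[OF paper_constant_ge[OF q p pq] this]
    show "K i * (x (Suc i) - x i) ^ 3 / 12 \<le> 1/2 * C * ((x (Suc i) - x i) ^ 3 * K i)"
      unfolding C_def by (simp add: mult.commute)
  qed
  finally show ?thesis by (simp add: C_def K_def sum_distrib_left mult.assoc)
qed

end
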